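(* Let $\tilde{\mathcal T}$ be an extended generic $(n,d)$-tropical oriented matroid. Then every semitype $T\in\tilde{\mathcal T}$ is a refinement of some honest type $T^+\in\tilde{\mathcal T}$, i.e. $G(T)\subseteq G(T^+)$.
   Context: Fix positive integers $n,d$; $K_{n,d}$ is the complete bipartite graph with left vertex set $[n]$ and right vertex set $[\bar d]=\{\bar1,\dots,\bar d\}$. An $(n,d)$-semitype is an $n$-tuple $T=(T_1,\dots,T_n)$ of (possibly empty) subsets of $[\bar d]$; it is an honest type (or type) if all $T_i$ are nonempty. Its graph $G(T)\subseteq K_{n,d}$ has edge $(i,\bar j)$ iff $\bar j\in T_i$. A semitype $T'$ is a refinement of $T$ if $G(T')\subseteq G(T)$. Two acyclic subgraphs of $K_{n,d}$ are compatible if whenever both contain a perfect matching between the same vertex sets $I\subseteq[n]$, $\bar J\subseteq[\bar d]$, these matchings coincide. An extended generic $(n,d)$-tropical oriented matroid is a collection $\tilde{\mathcal T}$ of $(n,d)$-semitypes, all with acyclic graphs, such that: (Boundary) for every $\bar j\in[\bar d]$, $(\{\bar j\},\dots,\{\bar j\})\in\tilde{\mathcal T}$; (Surrounding) if $T\in\tilde{\mathcal T}$ and $T'$ is a semitype refining $T$, then $T'\in\tilde{\mathcal T}$; (Compatibility) $G(U),G(V)$ are compatible for all $U,V\in\tilde{\mathcal T}$; (Elimination) for all $U,V\in\tilde{\mathcal T}$ and $i\in[n]$ there is $W\in\tilde{\mathcal T}$ with $W_i=U_i\cup V_i$ and $W_{i'}\in\{U_{i'},V_{i'}\}$ for all $i'\neq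 i$. *)

theory Defs
  imports Main
begin

text \<open>Conventions: left vertices of K_{n,d} are 0..n-1, right vertices are 0..d-1.
An (n,d)-semitype is a list of length n of subsets of {0..<d}.\<close>

definition semitype :: "nat \<Rightarrow> nat \<Rightarrow> nat set list \<Rightarrow> bool" where
  "semitype n d T \<longleftrightarrow> length T = n \<and> (\<forall>i<n. T ! i \<subseteq> {0..<d})"

definition honest_type :: "nat \<Rightarrow> nat \<Rightarrow> nat set list \<Rightarrow> bool" where
  "honest_type n d T \<longleftrightarrow> semitype n d T \<and> (\<forall>i<n. T ! i \<noteq> {})"

definition graph_of :: "nat set list \<Rightarrow> (nat \<times> nat) set" where
  "graph_of T = {(i, j). i < length T \<and> j \<in> T ! i}"

definition bip_acyclic :: "(nat \<times> nat) set \<Rightarrow> bool" where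
  "bip_acyclic E \<longleftrightarrow> \<not> (\<exists>is js. length is = length js \<and> 2 \<le> length is \<and> distinct is \<and> distinct js \<and>
      (\<forall>t<length is. (is ! t, js ! t) \<in> E \<and> (is ! (Suc t mod length is), js ! t) \<in> E))"

definition perfect_matching :: "(nat \<times> nat) set \<Rightarrow> nat set \<Rightarrow> nat set \<Rightarrow> bool" where
  "perfect_matching M I J \<longleftrightarrow> M \<subseteq> I \<times> J \<and>
     (\<forall>i\<in>I. \<exists>!j. (i, j) \<in> M) \<and> (\<forall>j\<in>J. \<exists>!i. (i, j) \<in> M)"

definition compatible :: "(nat \<times> nat) set \<Rightarrow> (nat \<times> nat) set \<Rightarrow> bool" where
  "compatible E1 E2 \<longleftrightarrow> (\<forall>I J M1 M2. M1 \<subseteq> E1 \<and> perfect_matching M1 I J \<and>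
      M2 \<subseteq> E2 \<and> perfect_matching M2 I J \<longrightarrow> M1 = M2)"

definition ext_generic_TOM :: "nat \<Rightarrow> nat \<Rightarrow> nat set list set \<Rightarrow> bool" where
  "ext_generic_TOM n d TT \<longleftrightarrow>
     (\<forall>T\<in>TT. semitype n d T \<and> bip_acyclic (graph_of T)) \<and>
     (\<forall>j<d. replicate n {j} \<in> TT) \<and>
     (\<forall>T\<in>TT. \<forall>T'. semitype n d T' \<and> graph_of T' \<subseteq> graph_of T \<longrightarrow> T' \<in> TT) \<and>
     (\<forall>U\<in>TT. \<forall>V\<in>TT. compatible (graph_of U) (graph_of V)) \<and>
     (\<forall>U\<in>TT. \<forall>V\<in>TT. \<forall>i<n. \<exists>W\<in>TT. W ! i = U ! i \<union> V ! i \<and>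
        (\<forall>i'<n. i' \<noteq> i \<longrightarrow> W ! i' \<in> {U ! i', V ! i'}))"

end

theory Submission
  imports Defs
begin

(* We generalise to families of semitypes that vanish outside a set R of rows and use only
   columns from a set C, a class closed under deleting a row or a column, and induct on
   |R| + |C|. Take W maximal for refinement above T and suppose some row i in R of W is empty.
   Maximality plus elimination force every member that is nonempty in row i to lie strictly
   below W in some row; eliminating such members against boundary types, and using the
   inductively given coarsenings of W with a column or a row deleted, one finds that every
   column occurs in two rows of W and that no singleton row {c} has c in two rows of W with
   further entries. This is impossible in the acyclic graph of W: otherwise the edges lying in
   non-singleton rows would form a nonempty graph of minimum degree two, hence contain a cycle. *)

lemma graph_of_subset_iff_list_all2:
  assumes "length T = length H"
  shows "graph_of T \<subseteq> graph_of H \<longleftrightarrow> list_all2 (\<subseteq>) T H"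
  using assms unfolding graph_of_def list_all2_conv_all_nth by auto

lemma class_order_list_all2_subset:
  "class.order (list_all2 (\<subseteq>)) (\<lambda>xs ys. list_all2 (\<subseteq>) xs ys \<and> \<not> list_all2 (\<subseteq>) ys xs)"
  unfolding class.order_def class.preorder_def class.order_axioms_def
proof (intro conjI allI impI)
  show "list_all2 (\<subseteq>) xs xs" for xs :: "'a set list"
    by (rule list_all2_refl) simp
  show "list_all2 (\<subseteq>) xs zs" if "list_all2 (\<subseteq>) xs ys" "list_all2 (\<subseteq>) ys zs" for xs ys zs :: "'a set list"
    by (rule list_all2_trans[OF _ that]) blast
  show "xs = ys" if "list_all2 (\<subseteq>) xs ys" "list_all2 (\<subseteq>) ys xs" for xs ys :: "'a set list"
    by (rule list_all2_antisym[OF _ that]) blast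
qed simp

definition bip_path :: "(nat \<times> nat) set \<Rightarrow> nat list \<Rightarrow> nat list \<Rightarrow> bool" where
  "bip_path E xs ys \<longleftrightarrow> length xs = Suc (length ys) \<and> distinct xs \<and> distinct ys \<and>
     (\<forall>t<length ys. (xs ! t, ys ! t) \<in> E \<and> (xs ! Suc t, ys ! t) \<in> E)"

lemma bip_path_closed_not_acyclic:
  assumes path: "bip_path E xs ys" and s: "s < length ys"
    and last_edge: "(xs ! length ys, y) \<in> E" and first_edge: "(xs ! s, y) \<in> E"
    and y: "y \<notin> set (drop s ys)"
  shows "\<not> bip_acyclic E"
proof -
  define I where "I = drop s xs"
  define J where "J = drop s ys @ [y]"
  have len: "length I = length J" "2 \<le> length I"
    using path s unfolding bip_path_def I_def J_def by auto
  have "(I ! t, J ! t) \<in> E \<and> (I ! (Suc t mod length I), J ! t) \<in> E" if t: "t < length I" for t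
  proof (cases "Suc t < length I")
    case True
    then have "I ! t = xs ! (s + t)" "I ! Suc t = xs ! Suc (s + t)" "J ! t = ys ! (s + t)"
      using path unfolding bip_path_def I_def J_def by (auto simp: nth_append)
    then show ?thesis
      using True path unfolding bip_path_def I_def by auto
  next
    case False
    then have "Suc t = length I" using t by simp
    then have wrap: "Suc t mod length I = 0" by simp
    have "s + t = length ys" using False t path unfolding bip_path_def I_def by simp
    then have "I ! t = xs ! length ys" "I ! (Suc t mod length I) = xs ! s" "J ! t = y"
      using path s wrap unfolding bip_path_def I_def J_def by (auto simp: nth_append)
    then show ?thesis using last_edge first_edge by simp
  qed
  moreover have "distinct I" "distinct J"
    using path y unfolding bip_path_def I_def J_def by auto
  ultimately show ?thesis
    unfolding bip_acyclic_def using len by blast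
qed

lemma bip_path_snoc:
  assumes "bip_path E xs ys" "(xs ! length ys, y) \<in> E" "(b, y) \<in> E" "b \<notin> set xs" "y \<notin> set ys"
  shows "bip_path E (xs @ [b]) (ys @ [y])"
  using assms unfolding bip_path_def by (auto simp: nth_append less_Suc_eq)

lemma not_bip_acyclic_if_no_leaves:
  assumes fin: "finite E" and ne: "E \<noteq> {}"
    and row_deg: "\<And>a y. (a, y) \<in> E \<Longrightarrow> \<exists>y'. y' \<noteq> y \<and> (a, y') \<in> E"
    and col_deg: "\<And>a y. (a, y) \<in> E \<Longrightarrow> \<exists>a'. a' \<noteq> a \<and> (a', y) \<in> E"
  shows "\<not> bip_acyclic E"
proof
  assume acyclic: "bip_acyclic E"
  \<comment> \<open>The far end of a longest path has a second edge, which closes a cycle or extends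
    the path.\<close>
  let ?Q = "\<lambda>k. \<exists>xs ys. bip_path E xs ys \<and> length ys = Suc k"
  obtain a0 y0 where "(a0, y0) \<in> E" using ne by auto
  moreover obtain a1 where "a1 \<noteq> a0" "(a1, y0) \<in> E" using col_deg[OF \<open>(a0, y0) \<in> E\<close>] by blast
  ultimately have "bip_path E [a0, a1] [y0]"
    unfolding bip_path_def by (auto simp: less_Suc_eq)
  then have Q0: "?Q 0" by (intro exI[of _ "[a0, a1]"] exI[of _ "[y0]"]) simp
  have bound: "k \<le> card (snd ` E)" if "?Q k" for k
  proof -
    obtain xs ys where path: "bip_path E xs ys" "length ys = Suc k" using \<open>?Q k\<close> by blast
    then have "set ys \<subseteq> snd ` E"
      unfolding bip_path_def by (force simp: in_set_conv_nth)
    then have "card (set ys) \<le> card (snd ` E)" using fin by (simp add: card_mono)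
    then show ?thesis using path unfolding bip_path_def by (simp add: distinct_card)
  qed
  have "\<exists>k. ?Q k \<and> (\<forall>k'. ?Q k' \<longrightarrow> k' \<le> k)"
    using bound by (intro Nat.ex_has_greatest_nat[where P = ?Q and k = 0 and b = "card (snd ` E)", OF Q0]) blast
  then obtain k where "?Q k" and longest: "\<And>k'. ?Q k' \<Longrightarrow> k' \<le> k" by blast
  then obtain xs ys where path: "bip_path E xs ys" and len: "length ys = Suc k" by blast
  have "(xs ! length ys, ys ! k) \<in> E" using path len unfolding bip_path_def by simp
  then obtain y where y: "(xs ! length ys, y) \<in> E" "y \<noteq> ys ! k" using row_deg by blast
  show False
  proof (cases "y \<in> set ys")
    case True
    then obtain s where "s < length ys" "y = ys ! s" by (auto simp: in_set_conv_nth)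
    then have s: "Suc s < length ys" "y = ys ! s" using y(2) len by (auto simp: less_Suc_eq)
    have "(xs ! Suc s, y) \<in> E" using path s unfolding bip_path_def by simp
    moreover have "y \<notin> set (drop (Suc s) ys)"
      using path s unfolding bip_path_def
      by (metis Cons_nth_drop_Suc Suc_lessD distinct.simps(2) distinct_drop)
    ultimately show False
      using bip_path_closed_not_acyclic[OF path s(1) y(1)] acyclic by blast
  next
    case y_new: False
    obtain b where b: "b \<noteq> xs ! length ys" "(b, y) \<in> E" using col_deg[OF y(1)] by blast
    show False
    proof (cases "b \<in> set xs")
      case True
      then obtain s where "s < length xs" "b = xs ! s" by (auto simp: in_set_conv_nth)
      then have s: "s < length ys" "b = xs ! s"
        using b(1) path unfolding bip_path_def by (auto simp: less_Suc_eq)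
      have "y \<notin> set (drop s ys)" using y_new by (auto dest: in_set_dropD)
      then show False
        using bip_path_closed_not_acyclic[OF path s(1) y(1)] b(2) s(2) acyclic by blast
    next
      case False
      have "bip_path E (xs @ [b]) (ys @ [y])"
        using bip_path_snoc[OF path y(1) b(2) False y_new] .
      then have "?Q (Suc k)" using len by (intro exI[of _ "xs @ [b]"] exI[of _ "ys @ [y]"]) simp
      then show False using longest by (metis Suc_n_not_le_n)
    qed
  qed
qed

lemma acyclic_exists_extremal_leaf_row:
  assumes fin: "finite C" and C_ne: "C \<noteq> {}"
    and entries: "\<forall>p<length W. W ! p \<subseteq> C"
    and acyclic: "bip_acyclic (graph_of W)"
    and two_rows: "\<forall>c\<in>C. \<exists>p<length W. \<exists>q<length W. p \<noteq> q \<and> c \<in> W ! p \<and> c \<in> W ! q"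
  shows "\<exists>r<length W. \<exists>c. W ! r = {c} \<and>
    (\<forall>t<length W. \<forall>t'<length W. c \<in> W ! t \<and> W ! t \<noteq> {c} \<and> c \<in> W ! t' \<and> W ! t' \<noteq> {c} \<longrightarrow> t = t')"
proof (rule ccontr)
  assume no_leaf: "\<not> ?thesis"
  define E where "E = {(p, c). p < length W \<and> c \<in> W ! p \<and> W ! p \<noteq> {c}}"
  have mem_E: "(p, c) \<in> E \<longleftrightarrow> p < length W \<and> c \<in> W ! p \<and> W ! p \<noteq> {c}" for p c
    by (simp add: E_def)
  have "E \<subseteq> graph_of W" unfolding E_def graph_of_def by auto
  then have "bip_acyclic E" using acyclic unfolding bip_acyclic_def by blast
  have two_branching: "\<exists>p q. p \<noteq> q \<and> (p, c) \<in> E \<and> (q, c) \<in> E" if c: "c \<in> C" for c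
  proof (cases "\<exists>r<length W. W ! r = {c}")
    case True
    then obtain r where "r < length W" "W ! r = {c}" by blast
    then obtain t t' where "t < length W" "t' < length W" "t \<noteq> t'"
      "c \<in> W ! t" "W ! t \<noteq> {c}" "c \<in> W ! t'" "W ! t' \<noteq> {c}"
      using no_leaf by blast
    then show ?thesis using mem_E by blast
  next
    case False
    obtain p q where "p < length W" "q < length W" "p \<noteq> q" "c \<in> W ! p" "c \<in> W ! q"
      using two_rows c by blast
    then show ?thesis using False mem_E by metis
  qed
  have "E \<subseteq> {..<length W} \<times> C" unfolding E_def using entries by auto
  then have "finite E" using fin by (meson finite_SigmaI finite_lessThan finite_subset)
  moreover have "E \<noteq> {}" using two_branching C_ne by blast
  moreover have "\<exists>y'. y' \<noteq> y \<and> (a, y') \<in> E" if edge: "(a, y) \<in> E" for a y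
  proof -
    obtain y' where "y' \<in> W ! a" "y' \<noteq> y" using edge mem_E by blast
    then show ?thesis using edge mem_E by (metis singletonD)
  qed
  moreover have "\<exists>a'. a' \<noteq> a \<and> (a', y) \<in> E" if edge: "(a, y) \<in> E" for a y
  proof -
    have "y \<in> C" using edge entries mem_E by blast
    then show ?thesis using two_branching by metis
  qed
  ultimately show False using not_bip_acyclic_if_no_leaves \<open>bip_acyclic E\<close> by blast
qed

definition boundary :: "nat \<Rightarrow> nat set \<Rightarrow> nat \<Rightarrow> nat set list" where
  "boundary n R j = map (\<lambda>p. if p \<in> R then {j} else {}) [0..<n]"

lemma length_boundary [simp]: "length (boundary n R j) = n"
  by (simp add: boundary_def)

lemma nth_boundary [simp]: "p < n \<Longrightarrow> boundary n R j ! p = (if p \<in> R then {j} else {})"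
  by (simp add: boundary_def)

locale restricted_TOM =
  fixes n :: nat and R C :: "nat set" and TT :: "nat set list set"
  assumes rows_subset: "R \<subseteq> {..<n}"
    and finite_columns: "finite C"
    and length_eq: "T \<in> TT \<Longrightarrow> length T = n"
    and entries_subset: "T \<in> TT \<Longrightarrow> p < n \<Longrightarrow> T ! p \<subseteq> C"
    and empty_outside_rows: "T \<in> TT \<Longrightarrow> p < n \<Longrightarrow> p \<notin> R \<Longrightarrow> T ! p = {}"
    and acyclic: "T \<in> TT \<Longrightarrow> bip_acyclic (graph_of T)"
    and boundary: "j \<in> C \<Longrightarrow> boundary n R j \<in> TT"
    and surrounding: "T \<in> TT \<Longrightarrow> list_all2 (\<subseteq>) T' T \<Longrightarrow> T' \<in> TT"
    and elimination: "U \<in> TT \<Longrightarrow> V \<in> TT \<Longrightarrow> i < n \<Longrightarrow>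
      \<exists>W\<in>TT. W ! i = U ! i \<union> V ! i \<and> (\<forall>i'<n. i' \<noteq> i \<longrightarrow> W ! i' \<in> {U ! i', V ! i'})"
begin

lemma nonempty_row_in_rows: "T \<in> TT \<Longrightarrow> p < n \<Longrightarrow> T ! p \<noteq> {} \<Longrightarrow> p \<in> R"
  using empty_outside_rows by blast

lemma finite_TT: "finite TT"
proof (rule finite_subset)
  show "TT \<subseteq> {xs. set xs \<subseteq> Pow C \<and> length xs = n}"
    using entries_subset length_eq by (fastforce simp: in_set_conv_nth)
  show "finite {xs. set xs \<subseteq> Pow C \<and> length xs = n}"
    using finite_columns by (simp add: finite_lists_length_eq)
qed

lemma exists_maximal_coarsening:
  assumes "T \<in> TT"
  obtains W where "W \<in> TT" "list_all2 (\<subseteq>) T W" "\<And>U. U \<in> TT \<Longrightarrow> list_all2 (\<subseteq>) W U \<Longrightarrow> U = W"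
  using order.finite_has_maximal2[OF class_order_list_all2_subset finite_TT assms] that by blast

lemma maximal_eq_if_not_strictly_below:
  assumes W: "W \<in> TT" and maximal: "\<And>U. U \<in> TT \<Longrightarrow> list_all2 (\<subseteq>) W U \<Longrightarrow> U = W"
  shows "U \<in> TT \<Longrightarrow> \<forall>p<n. \<not> U ! p \<subset> W ! p \<Longrightarrow> U = W"
proof (induction "card {p. p < n \<and> \<not> W ! p \<subseteq> U ! p}" arbitrary: U rule: less_induct)
  case less
  show ?case
  proof (cases "\<exists>q<n. \<not> W ! q \<subseteq> U ! q")
    case False
    then have "list_all2 (\<subseteq>) W U"
      using less.prems(1) length_eq W by (simp add: list_all2_conv_all_nth)
    then show ?thesis using maximal less.prems(1) by blast
  next
    case True
    then obtain q where q: "q < n" "\<not> W ! q \<subseteq> U ! q" by blast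
    \<comment> \<open>Eliminating U and W in row q gives a member that misses W in fewer rows.\<close>
    obtain V where V: "V \<in> TT" "V ! q = U ! q \<union> W ! q"
      and V_other: "\<forall>p<n. p \<noteq> q \<longrightarrow> V ! p \<in> {U ! p, W ! p}"
      using elimination[OF less.prems(1) W q(1)] by blast
    have "{p. p < n \<and> \<not> W ! p \<subseteq> V ! p} \<subseteq> {p. p < n \<and> \<not> W ! p \<subseteq> U ! p} - {q}"
      using V(2) V_other by auto
    then have "card {p. p < n \<and> \<not> W ! p \<subseteq> V ! p} \<le> card ({p. p < n \<and> \<not> W ! p \<subseteq> U ! p} - {q})"
      by (intro card_mono) auto
    also have "\<dots> < card {p. p < n \<and> \<not> W ! p \<subseteq> U ! p}"
      using q by (intro card_Diff1_less) auto
    finally have fewer: "card {p. p < n \<and> \<not> W ! p \<subseteq> V ! p} < card {p. p < n \<and> \<not> W ! p \<subseteq> U ! p}" .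
    have "\<not> V ! p \<subset> W ! p" if "p < n" for p
    proof (cases "p = q")
      case False
      then have "V ! p \<in> {U ! p, W ! p}" using V_other that by blast
      then show ?thesis using less.prems(2) that by auto
    qed (use V(2) in auto)
    then have "V = W" using less.hyps[OF fewer V(1)] by blast
    moreover have "\<not> U ! q \<subseteq> W ! q" using q less.prems(2) by auto
    ultimately show ?thesis using V(2) by auto
  qed
qed

end

definition restriction :: "nat \<Rightarrow> nat set \<Rightarrow> nat set \<Rightarrow> nat set list set \<Rightarrow> nat set list set" where
  "restriction n R C TT = {T \<in> TT. \<forall>p<n. T ! p \<subseteq> C \<and> (p \<notin> R \<longrightarrow> T ! p = {})}"

lemma mem_restriction:
  "T \<in> restriction n R C TT \<longleftrightarrow> T \<in> TT \<and> (\<forall>p<n. T ! p \<subseteq> C \<and> (p \<notin> R \<longrightarrow> T ! p = {}))"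
  by (simp add: restriction_def)

lemma restricted_TOM_restriction:
  assumes "restricted_TOM n R C TT" and "R' \<subseteq> R" and "C' \<subseteq> C"
  shows "restricted_TOM n R' C' (restriction n R' C' TT)"
proof -
  interpret restricted_TOM n R C TT by fact
  show ?thesis
  proof (rule restricted_TOM.intro)
    show "R' \<subseteq> {..<n}" using rows_subset \<open>R' \<subseteq> R\<close> by blast
    show "finite C'" using finite_columns \<open>C' \<subseteq> C\<close> by (rule finite_subset[rotated])
    show "length T = n" if "T \<in> restriction n R' C' TT" for T
      using that length_eq by (simp add: mem_restriction)
    show "T ! p \<subseteq> C'" if "T \<in> restriction n R' C' TT" "p < n" for T p
      using that by (simp add: mem_restriction)
    show "T ! p = {}" if "T \<in> restriction n R' C' TT" "p < n" "p \<notin> R'" for T p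
      using that by (simp add: mem_restriction)
    show "bip_acyclic (graph_of T)" if "T \<in> restriction n R' C' TT" for T
      using that acyclic by (simp add: mem_restriction)
  next
    fix j assume "j \<in> C'"
    have "list_all2 (\<subseteq>) (boundary n R' j) (boundary n R j)"
      using \<open>R' \<subseteq> R\<close> by (auto simp: list_all2_conv_all_nth)
    then show "boundary n R' j \<in> restriction n R' C' TT"
      using surrounding boundary \<open>j \<in> C'\<close> \<open>C' \<subseteq> C\<close> by (auto simp: mem_restriction)
  next
    fix T T' assume T: "T \<in> restriction n R' C' TT" and refines: "list_all2 (\<subseteq>) T' T"
    then have "T' \<in> TT" using surrounding unfolding mem_restriction by blast
    moreover have "length T' = n"
      using refines T length_eq by (auto simp: mem_restriction dest: list_all2_lengthD)
    moreover have "T' ! p \<subseteq> T ! p" if "p < n" for p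
      using refines that \<open>length T' = n\<close> by (simp add: list_all2_nthD)
    ultimately show "T' \<in> restriction n R' C' TT" using T unfolding mem_restriction by blast
  next
    fix U V i assume U: "U \<in> restriction n R' C' TT" and V: "V \<in> restriction n R' C' TT" and "i < n"
    have "U \<in> TT" "V \<in> TT" using U V by (simp_all add: mem_restriction)
    then obtain W where W: "W \<in> TT" "W ! i = U ! i \<union> V ! i"
      and W_other: "\<forall>i'<n. i' \<noteq> i \<longrightarrow> W ! i' \<in> {U ! i', V ! i'}"
      using elimination \<open>i < n\<close> by blast
    have "W ! p \<subseteq> C' \<and> (p \<notin> R' \<longrightarrow> W ! p = {})" if "p < n" for p
    proof -
      have "U ! p \<subseteq> C' \<and> (p \<notin> R' \<longrightarrow> U ! p = {})" "V ! p \<subseteq> C' \<and> (p \<notin> R' \<longrightarrow> V ! p = {})"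
        using U V that by (simp_all add: mem_restriction)
      moreover have "W ! p = U ! p \<union> V ! p \<or> W ! p \<in> {U ! p, V ! p}"
        using W(2) W_other that by blast
      ultimately show ?thesis by auto
    qed
    then have "W \<in> restriction n R' C' TT" using W(1) by (simp add: mem_restriction)
    then show "\<exists>W\<in>restriction n R' C' TT. W ! i = U ! i \<union> V ! i \<and>
        (\<forall>i'<n. i' \<noteq> i \<longrightarrow> W ! i' \<in> {U ! i', V ! i'})"
      using W(2) W_other by blast
  qed
qed

context restricted_TOM
begin

lemma delete_column_mem_restriction:
  assumes "T \<in> TT"
  shows "map (\<lambda>S. S - {c}) T \<in> restriction n R (C - {c}) TT"
proof -
  have "map (\<lambda>S. S - {c}) T \<in> TT"
    using assms by (rule surrounding) (auto simp: list_all2_conv_all_nth)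
  moreover have "\<forall>p<n. map (\<lambda>S. S - {c}) T ! p \<subseteq> C - {c} \<and> (p \<notin> R \<longrightarrow> map (\<lambda>S. S - {c}) T ! p = {})"
    using entries_subset[OF assms] empty_outside_rows[OF assms] length_eq[OF assms] by auto
  ultimately show ?thesis by (simp add: mem_restriction)
qed

lemma delete_row_mem_restriction:
  assumes "T \<in> TT" and "r < n"
  shows "T[r := {}] \<in> restriction n (R - {r}) C TT"
proof -
  have r_less: "r < length T" using assms length_eq by simp
  have "T[r := {}] \<in> TT"
    by (rule surrounding[OF assms(1)]) (simp add: list_all2_conv_all_nth nth_list_update r_less)
  moreover have "\<forall>p<n. T[r := {}] ! p \<subseteq> C \<and> (p \<notin> R - {r} \<longrightarrow> T[r := {}] ! p = {})"
    using entries_subset[OF assms(1)] empty_outside_rows[OF assms(1)] length_eq[OF assms(1)] r_less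
    by (auto simp: nth_list_update)
  ultimately show ?thesis by (simp add: mem_restriction)
qed

end

lemma ext_generic_TOM_imp_restricted_TOM:
  assumes "ext_generic_TOM n d TT"
  shows "restricted_TOM n {..<n} {0..<d} TT"
proof (rule restricted_TOM.intro)
  have members: "\<And>T. T \<in> TT \<Longrightarrow> semitype n d T \<and> bip_acyclic (graph_of T)"
    and boundary: "\<And>j. j < d \<Longrightarrow> replicate n {j} \<in> TT"
    and surrounding: "\<And>T T'. T \<in> TT \<Longrightarrow> semitype n d T' \<Longrightarrow> graph_of T' \<subseteq> graph_of T \<Longrightarrow> T' \<in> TT"
    and elimination: "\<And>U V i. U \<in> TT \<Longrightarrow> V \<in> TT \<Longrightarrow> i < n \<Longrightarrow>
      \<exists>W\<in>TT. W ! i = U ! i \<union> V ! i \<and> (\<forall>i'<n. i' \<noteq> i \<longrightarrow> W ! i' \<in> {U ! i', V ! i'})"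
    using assms unfolding ext_generic_TOM_def by blast+
  show "{..<n} \<subseteq> {..<n}" "finite {0..<d}" by simp_all
  show "length T = n" if "T \<in> TT" for T
    using members[OF that] unfolding semitype_def by blast
  show "T ! p \<subseteq> {0..<d}" if "T \<in> TT" "p < n" for T p
    using members[OF that(1)] that(2) unfolding semitype_def by blast
  show "T ! p = {}" if "T \<in> TT" "p < n" "p \<notin> {..<n}" for T p
    using that by simp
  show "bip_acyclic (graph_of T)" if "T \<in> TT" for T
    using members[OF that] by blast
  show "boundary n {..<n} j \<in> TT" if "j \<in> {0..<d}" for j
  proof -
    have "boundary n {..<n} j = replicate n {j}" by (rule nth_equalityI) auto
    then show ?thesis using boundary that by simp
  qed
  show "T' \<in> TT" if T: "T \<in> TT" and refines: "list_all2 (\<subseteq>) T' T" for T T'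
  proof (rule surrounding[OF T])
    have "semitype n d T" using members[OF T] by blast
    moreover have "length T' = length T" using refines by (rule list_all2_lengthD)
    moreover have "T' ! p \<subseteq> T ! p" if "p < length T" for p
      using refines that \<open>length T' = length T\<close> by (simp add: list_all2_nthD)
    ultimately show "semitype n d T'"
      unfolding semitype_def by (metis subset_trans)
    show "graph_of T' \<subseteq> graph_of T"
      using graph_of_subset_iff_list_all2 \<open>length T' = length T\<close> refines by blast
  qed
  show "\<exists>W\<in>TT. W ! i = U ! i \<union> V ! i \<and> (\<forall>i'<n. i' \<noteq> i \<longrightarrow> W ! i' \<in> {U ! i', V ! i'})"
    if "U \<in> TT" "V \<in> TT" "i < n" for U V i
    using elimination that .
qed

locale maximal_gap = restricted_TOM +
  fixes W :: "nat set list" and i :: nat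
  assumes W_in: "W \<in> TT"
    and W_maximal: "\<And>U. U \<in> TT \<Longrightarrow> list_all2 (\<subseteq>) W U \<Longrightarrow> U = W"
    and gap_row: "i \<in> R" and gap: "W ! i = {}"
begin

lemma gap_row_less: "i < n"
  using gap_row rows_subset by blast

lemma exists_strictly_below:
  assumes "U \<in> TT" "U ! i \<noteq> {}"
  obtains p where "p < n" "U ! p \<subset> W ! p"
  using maximal_eq_if_not_strictly_below[OF W_in W_maximal] assms gap by blast

lemma boundary_gap_nonempty: "boundary n R c ! i \<noteq> {}"
  using gap_row gap_row_less by simp

lemma boundary_strictly_below:
  assumes "q < n" "boundary n R c ! q \<subset> W ! q"
  shows "c \<in> W ! q" "W ! q \<noteq> {c}"
proof -
  have "q \<in> R" using nonempty_row_in_rows[OF W_in] assms by blast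
  then show "c \<in> W ! q" "W ! q \<noteq> {c}" using assms by auto
qed

lemma exists_strictly_below_other_row:
  assumes U: "U \<in> TT" "U ! i \<noteq> {}" and V: "V \<in> TT" "V ! i \<noteq> {}"
    and p: "p < n" "W ! p \<subseteq> U ! p \<union> V ! p"
  obtains q where "q < n" "q \<noteq> p" "U ! q \<subset> W ! q \<or> V ! q \<subset> W ! q"
proof -
  obtain Z where Z: "Z \<in> TT" "Z ! p = U ! p \<union> V ! p"
    and Z_other: "\<forall>q<n. q \<noteq> p \<longrightarrow> Z ! q \<in> {U ! q, V ! q}"
    using elimination[OF U(1) V(1) p(1)] by blast
  have "Z ! i \<noteq> {}"
    using Z(2) Z_other U(2) V(2) gap_row_less by (cases "i = p") auto
  then obtain q where q: "q < n" "Z ! q \<subset> W ! q" using exists_strictly_below[OF Z(1)] by blast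
  have "q \<noteq> p" using q(2) Z(2) p(2) by auto
  then have "Z ! q \<in> {U ! q, V ! q}" using Z_other q(1) by blast
  then show thesis using that q \<open>q \<noteq> p\<close> by blast
qed

lemma not_single_column: "C \<noteq> {c}"
proof
  assume C: "C = {c}"
  then have "boundary n R c \<in> TT" using boundary by simp
  moreover have "boundary n R c ! i \<noteq> {}" by (rule boundary_gap_nonempty)
  ultimately obtain p where "p < n" "boundary n R c ! p \<subset> W ! p"
    using exists_strictly_below by blast
  then have "c \<in> W ! p" "W ! p \<noteq> {c}" by (rule boundary_strictly_below)+
  moreover have "W ! p \<subseteq> {c}" using entries_subset[OF W_in \<open>p < n\<close>] C by simp
  ultimately show False by blast
qed

lemma column_in_two_rows:
  assumes c: "c \<in> C" and H: "H \<in> TT" "H ! i \<noteq> {}"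
    and H_cover: "\<forall>p<n. W ! p - {c} \<subseteq> H ! p \<and> c \<notin> H ! p"
  shows "\<exists>p<n. \<exists>q<n. p \<noteq> q \<and> c \<in> W ! p \<and> c \<in> W ! q"
proof -
  have c_in_W: "c \<in> W ! q" if "q < n" "H ! q \<subset> W ! q" for q
    using H_cover that by blast
  obtain p where p: "p < n" "H ! p \<subset> W ! p" using exists_strictly_below[OF H] by blast
  then have "c \<in> W ! p" by (rule c_in_W)
  then have "p \<in> R" using nonempty_row_in_rows[OF W_in p(1)] by blast
  then have "W ! p \<subseteq> H ! p \<union> boundary n R c ! p" using H_cover p(1) by auto
  then obtain q where q: "q < n" "q \<noteq> p" "H ! q \<subset> W ! q \<or> boundary n R c ! q \<subset> W ! q"
    using exists_strictly_below_other_row[OF H boundary[OF c] boundary_gap_nonempty p(1)] by blast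
  then have "c \<in> W ! q" using c_in_W boundary_strictly_below by blast
  then show ?thesis using p(1) q(1,2) \<open>c \<in> W ! p\<close> by blast
qed

lemma column_in_two_branching_rows:
  assumes r: "r < n" "W ! r = {c}"
    and Hr: "Hr \<in> TT" "Hr ! i \<noteq> {}" "\<forall>p<n. p \<noteq> r \<longrightarrow> W ! p \<subseteq> Hr ! p"
    and Hc: "Hc \<in> TT" "\<forall>p\<in>R. Hc ! p \<noteq> {}" "\<forall>p<n. W ! p - {c} \<subseteq> Hc ! p \<and> c \<notin> Hc ! p"
  shows "\<exists>t<n. \<exists>q<n. t \<noteq> q \<and> c \<in> W ! t \<and> W ! t \<noteq> {c} \<and> c \<in> W ! q \<and> W ! q \<noteq> {c}"
proof -
  have c: "c \<in> C" using entries_subset[OF W_in r(1)] r(2) by blast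
  have "r \<in> R" using nonempty_row_in_rows[OF W_in r(1)] r(2) by blast
  then have "W ! r \<subseteq> Hr ! r \<union> boundary n R c ! r" using r by simp
  then obtain t where t: "t < n" "t \<noteq> r" "Hr ! t \<subset> W ! t \<or> boundary n R c ! t \<subset> W ! t"
    by (rule exists_strictly_below_other_row[OF Hr(1,2) boundary[OF c] boundary_gap_nonempty r(1)])
  moreover have "\<not> Hr ! t \<subset> W ! t" using Hr(3) t(1,2) by blast
  ultimately have "boundary n R c ! t \<subset> W ! t" by blast
  then have t_branching: "c \<in> W ! t" "W ! t \<noteq> {c}" using boundary_strictly_below[OF t(1)] by simp_all
  have "t \<in> R" using nonempty_row_in_rows[OF W_in t(1)] t_branching by blast
  then have "W ! t \<subseteq> boundary n R c ! t \<union> Hc ! t" using Hc(3) t(1) by auto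
  then obtain q where q: "q < n" "q \<noteq> t" "boundary n R c ! q \<subset> W ! q \<or> Hc ! q \<subset> W ! q"
    by (rule exists_strictly_below_other_row[OF boundary[OF c] boundary_gap_nonempty
          Hc(1) Hc(2)[rule_format, OF gap_row] t(1)])
  have "c \<in> W ! q \<and> W ! q \<noteq> {c}"
  proof (cases "boundary n R c ! q \<subset> W ! q")
    case True
    then show ?thesis using boundary_strictly_below[OF q(1)] by blast
  next
    case False
    then have below: "Hc ! q \<subset> W ! q" using q(3) by blast
    then have "c \<in> W ! q" using Hc(3) q(1) by blast
    moreover obtain x where "x \<in> Hc ! q"
      using Hc(2) nonempty_row_in_rows[OF W_in q(1)] \<open>c \<in> W ! q\<close> by blast
    moreover have "x \<noteq> c" "x \<in> W ! q" using Hc(3) q(1) below \<open>x \<in> Hc ! q\<close> by blast+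
    ultimately show ?thesis by blast
  qed
  then show ?thesis using t(1) q(1,2) t_branching by blast
qed

lemma no_deletion_witnesses:
  assumes C_ne: "C \<noteq> {}"
    and column_witness: "\<And>c. c \<in> C \<Longrightarrow>
      \<exists>H\<in>TT. (\<forall>p\<in>R. H ! p \<noteq> {}) \<and> (\<forall>p<n. W ! p - {c} \<subseteq> H ! p \<and> c \<notin> H ! p)"
    and row_witness: "\<And>r. r \<in> R \<Longrightarrow> r \<noteq> i \<Longrightarrow>
      \<exists>H\<in>TT. H ! i \<noteq> {} \<and> (\<forall>p<n. p \<noteq> r \<longrightarrow> W ! p \<subseteq> H ! p)"
  shows False
proof -
  have "\<forall>c\<in>C. \<exists>p<n. \<exists>q<n. p \<noteq> q \<and> c \<in> W ! p \<and> c \<in> W ! q"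
  proof
    fix c assume c: "c \<in> C"
    then obtain H where "H \<in> TT" "\<forall>p\<in>R. H ! p \<noteq> {}" "\<forall>p<n. W ! p - {c} \<subseteq> H ! p \<and> c \<notin> H ! p"
      using column_witness by blast
    then show "\<exists>p<n. \<exists>q<n. p \<noteq> q \<and> c \<in> W ! p \<and> c \<in> W ! q"
      using column_in_two_rows[OF c] gap_row by blast
  qed
  then have "\<exists>r<length W. \<exists>c. W ! r = {c} \<and>
    (\<forall>t<length W. \<forall>t'<length W. c \<in> W ! t \<and> W ! t \<noteq> {c} \<and> c \<in> W ! t' \<and> W ! t' \<noteq> {c} \<longrightarrow> t = t')"
    using entries_subset[OF W_in] length_eq[OF W_in]
    by (intro acyclic_exists_extremal_leaf_row[OF finite_columns C_ne _ acyclic[OF W_in]]) simp_all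
  then obtain r c where r: "r < n" "W ! r = {c}" and extremal:
    "\<forall>t<n. \<forall>t'<n. c \<in> W ! t \<and> W ! t \<noteq> {c} \<and> c \<in> W ! t' \<and> W ! t' \<noteq> {c} \<longrightarrow> t = t'"
    using length_eq[OF W_in] by auto
  have "r \<in> R" "r \<noteq> i" using nonempty_row_in_rows[OF W_in r(1)] r(2) gap by auto
  then obtain Hr where "Hr \<in> TT" "Hr ! i \<noteq> {}" "\<forall>p<n. p \<noteq> r \<longrightarrow> W ! p \<subseteq> Hr ! p"
    using row_witness by blast
  moreover have "c \<in> C" using entries_subset[OF W_in r(1)] r(2) by blast
  then obtain Hc where "Hc \<in> TT" "\<forall>p\<in>R. Hc ! p \<noteq> {}" "\<forall>p<n. W ! p - {c} \<subseteq> Hc ! p \<and> c \<notin> Hc ! p"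
    using column_witness by blast
  ultimately have "\<exists>t<n. \<exists>q<n. t \<noteq> q \<and> c \<in> W ! t \<and> W ! t \<noteq> {c} \<and> c \<in> W ! q \<and> W ! q \<noteq> {c}"
    by (intro column_in_two_branching_rows[OF r])
  then show False using extremal by blast
qed

end

lemma restricted_TOM_exists_full_coarsening:
  assumes "restricted_TOM n R C TT" and "C \<noteq> {}" and "T \<in> TT"
  shows "\<exists>H\<in>TT. list_all2 (\<subseteq>) T H \<and> (\<forall>p\<in>R. H ! p \<noteq> {})"
  using assms
proof (induction "card R + card C" arbitrary: R C TT T rule: less_induct)
  case less
  interpret restricted_TOM n R C TT by (fact less.prems(1))
  obtain W where W: "W \<in> TT" "list_all2 (\<subseteq>) T W"
    and maximal: "\<And>U. U \<in> TT \<Longrightarrow> list_all2 (\<subseteq>) W U \<Longrightarrow> U = W"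
    using exists_maximal_coarsening[OF less.prems(3)] by blast
  show ?case
  proof (rule ccontr)
    assume "\<not> ?case"
    then obtain i where "i \<in> R" "W ! i = {}" using W by blast
    then interpret maximal_gap n R C TT W i
      using W(1) maximal by (intro maximal_gap.intro less.prems(1) maximal_gap_axioms.intro)
    show False
    proof (rule no_deletion_witnesses[OF less.prems(2)])
      fix c assume c: "c \<in> C"
      have smaller: "card R + card (C - {c}) < card R + card C"
        using card_Diff1_less[OF finite_columns c] by simp
      have "C - {c} \<noteq> {}" using not_single_column c by blast
      from less.hyps[OF smaller restricted_TOM_restriction[OF less.prems(1) subset_refl Diff_subset]
          this delete_column_mem_restriction[OF W(1)]]
      obtain H where H: "H \<in> restriction n R (C - {c}) TT"
        "list_all2 (\<subseteq>) (map (\<lambda>S. S - {c}) W) H" "\<forall>p\<in>R. H ! p \<noteq> {}"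
        by blast
      have "W ! p - {c} \<subseteq> H ! p \<and> c \<notin> H ! p" if "p < n" for p
        using list_all2_nthD[OF H(2), of p] length_eq[OF W(1)] H(1) that by (auto simp: mem_restriction)
      moreover have "H \<in> TT" using H(1) by (simp add: mem_restriction)
      ultimately show "\<exists>H\<in>TT. (\<forall>p\<in>R. H ! p \<noteq> {}) \<and> (\<forall>p<n. W ! p - {c} \<subseteq> H ! p \<and> c \<notin> H ! p)"
        using H(3) by blast
    next
      fix r assume r: "r \<in> R" "r \<noteq> i"
      have "finite R" using rows_subset finite_subset by blast
      then have smaller: "card (R - {r}) + card C < card R + card C"
        using card_Diff1_less[OF \<open>finite R\<close> r(1)] by simp
      have "r < n" using r(1) rows_subset by blast
      from less.hyps[OF smaller restricted_TOM_restriction[OF less.prems(1) Diff_subset subset_refl]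
          less.prems(2) delete_row_mem_restriction[OF W(1) this]]
      obtain H where H: "H \<in> restriction n (R - {r}) C TT"
        "list_all2 (\<subseteq>) (W[r := {}]) H" "\<forall>p\<in>R - {r}. H ! p \<noteq> {}"
        by blast
      have "W ! p \<subseteq> H ! p" if "p < n" "p \<noteq> r" for p
        using list_all2_nthD[OF H(2), of p] length_eq[OF W(1)] that by simp
      moreover have "H \<in> TT" using H(1) by (simp add: mem_restriction)
      moreover have "H ! i \<noteq> {}" using H(3) gap_row r(2) by blast
      ultimately show "\<exists>H\<in>TT. H ! i \<noteq> {} \<and> (\<forall>p<n. p \<noteq> r \<longrightarrow> W ! p \<subseteq> H ! p)"
        by blast
    qed
  qed
qed

theorem mainTheorem3:
  fixes n d :: nat and TT :: "nat set list set"
  assumes "0 < n" and "0 < d"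
    and "ext_generic_TOM n d TT"
    and "T \<in> TT"
  shows "\<exists>Tp\<in>TT. honest_type n d Tp \<and> graph_of T \<subseteq> graph_of Tp"
proof -
  have "restricted_TOM n {..<n} {0..<d} TT"
    using assms(3) by (rule ext_generic_TOM_imp_restricted_TOM)
  moreover have "{0..<d} \<noteq> {}" using assms(2) by simp
  ultimately obtain H where H: "H \<in> TT" "list_all2 (\<subseteq>) T H" "\<forall>p\<in>{..<n}. H ! p \<noteq> {}"
    using restricted_TOM_exists_full_coarsening assms(4) by blast
  have "semitype n d H" using H(1) assms(3) unfolding ext_generic_TOM_def by blast
  then have "honest_type n d H" using H(3) unfolding honest_type_def by simp
  moreover have "graph_of T \<subseteq> graph_of H"
    using H(2) graph_of_subset_iff_list_all2 list_all2_lengthD by blast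
  ultimately show ?thesis using H(1) by blast
qed

end
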